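(* Consider the contextual learning setting in which all contexts $\sigma_1,\dots,\sigma_T$ lie in a known finite set $P\subseteq\Sigma$. Let $\Gamma\in[0,1]^{|\mathcal X|\times N}$ be $(\kappa,\delta)$-admissible, $\epsilon\ge0$, and $D$ a $\big(\rho,\frac{1+2\epsilon}{\delta}\big)$-dispersed distribution. Run Generalized FTPL in the contextual setting with translation matrix $\Gamma^P$ (one perturbation $\alpha_{\sigma,j}\sim D$ per column $(\sigma,j)\in P\times[N]$). Then the chosen policies $\pi_1,\dots,\pi_{T+1}$ satisfy \[ \mathbb E\Big[\sum_{t=1}^T f_c(\pi_{t+1},(\sigma_t,y_t))-f_c(\pi_t,(\sigma_t,y_t))\Big]\le 2TN\kappa\rho . \]
   Context: Original setting: finite learner action set $\mathcal X$, adversary action set $\mathcal Y$, payoff $f:\mathcal X\times\mathcal Y\to[0,1]$. Contextual setting: policy class $\Pi$ of maps $\Sigma\to\mathcal X$, adversary actions $(\sigma_t,y_t)\in\Sigma\times\mathcal Y$ fixed in advance, payoff $f_c(\pi,(\sigma,y))=f(\pi(\sigma),y)$. $\Gamma^P$: matrix with rows indexed by $\pi\in\Pi$, columns by $(\sigma,j)\in P\times[N]$, entries $\Gamma^P_{\pi,(\sigma,j)}=\Gamma_{\pi(\sigma),j}$. Generalized FTPL in the contextual setting: draw the perturbation vector $\vec\alpha$ once with i.i.d. $D$ entries; for $t=1,\dots,T+1$, $\pi_t$ is any policy with $\sum_{\tau<t}f_c(\pi_t,(\sigma_\tau,y_\tau))+\vec\alpha\cdot\Gamma^P_{\pi_t}\ge\sum_{\tau<t}f_c(\pi,(\sigma_\tau,y_\tau))+\vec\alpha\cdot\Gamma^P_{\pi}-\epsilon$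 for all $\pi\in\Pi$. $\Gamma$ is $(\kappa,\delta)$-admissible if its rows are distinct, each column has at most $\kappa$ distinct values, and distinct values in a column differ by at least $\delta$. $D$ is $(\rho,L)$-dispersed if every interval of length $L$ has probability at most $\rho$. *)

theory Defs
  imports "HOL-Probability.Probability"
begin

definition admissible :: "('x \<Rightarrow> nat \<Rightarrow> real) \<Rightarrow> nat \<Rightarrow> nat \<Rightarrow> real \<Rightarrow> bool" where
  "admissible G N \<kappa> \<delta> \<longleftrightarrow>
     (\<forall>x x'. x \<noteq> x' \<longrightarrow> (\<exists>j<N. G x j \<noteq> G x' j)) \<and>
     (\<forall>j<N. card (range (\<lambda>x. G x j)) \<le> \<kappa>) \<and>
     (\<forall>j<N. \<forall>x x'. G x j \<noteq> G x' j \<longrightarrow> \<bar>G x j - G x' j\<bar> \<ge> \<delta>)"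

definition dispersed :: "real measure \<Rightarrow> real \<Rightarrow> real \<Rightarrow> bool" where
  "dispersed D \<rho> L \<longleftrightarrow> (\<forall>a. measure D {a..a + L} \<le> \<rho>)"

text \<open>Perturbation term alpha . G^P_pi, columns (sigma, j) in P x [N].\<close>
definition pert :: "('x \<Rightarrow> nat \<Rightarrow> real) \<Rightarrow> 's set \<Rightarrow> nat \<Rightarrow> ('s \<times> nat \<Rightarrow> real) \<Rightarrow> ('s \<Rightarrow> 'x) \<Rightarrow> real" where
  "pert G P N \<alpha> \<pi> = (\<Sum>c\<in>P \<times> {..<N}. \<alpha> c * G (\<pi> (fst c)) (snd c))"

definition cum_payoff :: "('x \<Rightarrow> 'y \<Rightarrow> real) \<Rightarrow> (nat \<Rightarrow> 's) \<Rightarrow> (nat \<Rightarrow> 'y) \<Rightarrow> nat \<Rightarrow> ('s \<Rightarrow> 'x) \<Rightarrow> real" where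
  "cum_payoff f \<sigma> y t \<pi> = (\<Sum>\<tau>\<in>{1..<t}. f (\<pi> (\<sigma> \<tau>)) (y \<tau>))"

definition ftpl_choice where
  "ftpl_choice f \<sigma> y G P N Pol \<epsilon> \<alpha> t \<pi>t \<longleftrightarrow> \<pi>t \<in> Pol \<and>
     (\<forall>\<pi>\<in>Pol. cum_payoff f \<sigma> y t \<pi>t + pert G P N \<alpha> \<pi>t
               \<ge> cum_payoff f \<sigma> y t \<pi> + pert G P N \<alpha> \<pi> - \<epsilon>)"

end

theory Submission
  imports Defs
begin

text \<open>
  Fix a round t and a column j of \<open>\<Gamma>\<close>, and condition on all perturbations except the
  coordinate a of column \<open>(\<sigma>\<^sub>t, j)\<close> of \<open>\<Gamma>\<^sup>P\<close>. As functions of a, the policies \<open>\<pi>\<^sub>t\<close> and \<open>\<pi>\<^sub>t\<^sub>+\<^sub>1\<close>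
  are \<open>\<epsilon>\<close>-optimal for objectives \<open>A \<pi> + a g \<pi>\<close> and \<open>A \<pi> + w \<pi> + a g \<pi>\<close>, where
  \<open>g \<pi> = \<Gamma>(\<pi>(\<sigma>\<^sub>t), j)\<close> and w is a payoff in [0,1]. If at two values a < b the value
  \<open>g \<pi>\<^sub>t = c\<close> is the same and \<open>g \<pi>\<^sub>t\<^sub>+\<^sub>1\<close> leaves c in the same direction (hence by at least \<open>\<delta>\<close>),
  adding two of the optimality inequalities gives \<open>(b - a) \<delta> \<le> 1 + 2\<epsilon>\<close>. So the values of a at
  which g switches lie in \<open>2\<kappa>\<close> intervals of length \<open>(1 + 2\<epsilon>)/\<delta>\<close>, each of probability at most \<open>\<rho>\<close>.
  Since the rows of \<open>\<Gamma>\<close> are distinct, every switch of action is a switch in one of the N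
  columns, and the payoff difference of a round is at most the indicator of such a switch.
\<close>

lemma bounded_gaps_subset_interval:
  fixes S :: "real set"
  assumes L: "0 \<le> L" and gaps: "\<And>a b. a \<in> S \<Longrightarrow> b \<in> S \<Longrightarrow> a < b \<Longrightarrow> b - a \<le> L"
  shows "\<exists>l. S \<subseteq> {l..l + L}"
proof (cases "S = {}")
  case True
  then show ?thesis by auto
next
  case False
  then obtain a0 where a0: "a0 \<in> S" by auto
  have bdd: "bdd_below S"
  proof
    fix b assume "b \<in> S"
    then show "a0 - L \<le> b"
      using gaps[OF \<open>b \<in> S\<close> a0] L by (cases "b < a0") auto
  qed
  have "S \<subseteq> {Inf S..Inf S + L}"
  proof
    fix b assume b: "b \<in> S"
    have "b - L \<le> Inf S"
    proof (rule cInf_greatest[OF False])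
      fix a assume "a \<in> S"
      then show "b - L \<le> a"
        using gaps[OF \<open>a \<in> S\<close> b] L by (cases "a < b") auto
    qed
    with cInf_lower[OF b bdd] show "b \<in> {Inf S..Inf S + L}" by simp
  qed
  then show ?thesis by blast
qed

lemma eps_optimal_switch_slopes_close:
  fixes a b u v X Y wX wY \<epsilon> \<delta> :: real
  assumes X_opt: "Y + b * v - \<epsilon> \<le> X + b * u"
    and Y_opt: "X + wX + a * u - \<epsilon> \<le> Y + wY + a * v"
    and w: "wY - wX \<le> 1" and uv: "u + \<delta> \<le> v" and ab: "a < b" and \<delta>: "0 < \<delta>"
  shows "b - a \<le> (1 + 2 * \<epsilon>) / \<delta>"
proof -
  have "(b - a) * \<delta> \<le> (b - a) * (v - u)"
    using uv ab by (intro mult_left_mono) auto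
  also have "\<dots> \<le> 1 + 2 * \<epsilon>"
    using X_opt Y_opt w by (simp add: algebra_simps)
  finally show ?thesis
    using \<delta> by (simp add: pos_le_divide_eq)
qed

lemma sets_Collect_finite_valued_rel:
  fixes g1 g2 :: "'a \<Rightarrow> 'x::finite"
  assumes g1: "g1 \<in> M \<rightarrow>\<^sub>M count_space UNIV" and g2: "g2 \<in> M \<rightarrow>\<^sub>M count_space UNIV"
  shows "{\<alpha> \<in> space M. R (g1 \<alpha>) (g2 \<alpha>)} \<in> sets M"
proof -
  have "{\<alpha> \<in> space M. R (g1 \<alpha>) (g2 \<alpha>)} =
      (\<Union>x1\<in>UNIV. \<Union>x2\<in>UNIV. if R x1 x2 then (g1 -` {x1} \<inter> space M) \<inter> (g2 -` {x2} \<inter> space M) else {})"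
    by auto
  also have "\<dots> \<in> sets M"
    using g1 g2 by (intro sets.finite_UN) (auto intro!: measurable_sets)
  finally show ?thesis .
qed

lemma measure_PiM_le_by_sections:
  fixes D :: "real measure" and E :: "('i \<Rightarrow> real) set"
  assumes D: "prob_space D" and i: "i \<in> I" and E: "E \<in> sets (PiM I (\<lambda>_. D))" and r: "0 \<le> r"
    and sections: "\<And>z. z \<in> space (PiM (I - {i}) (\<lambda>_. D)) \<Longrightarrow>
                  \<exists>B\<in>sets D. {a \<in> space D. z(i := a) \<in> E} \<subseteq> B \<and> measure D B \<le> r"
  shows "measure (PiM I (\<lambda>_. D)) E \<le> r"
proof -
  define J where "J = I - {i}"
  have IJ: "insert i J = I" using i by (auto simp: J_def)
  interpret D: prob_space D by fact
  interpret PJ: prob_space "PiM J (\<lambda>_. D)" using D by (intro prob_space_PiM)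
  interpret PI: prob_space "PiM I (\<lambda>_. D)" using D by (intro prob_space_PiM)
  interpret pair_prob_space D "PiM J (\<lambda>_. D)" by unfold_locales
  define F :: "real \<times> ('i \<Rightarrow> real) \<Rightarrow> ('i \<Rightarrow> real)" where "F = (\<lambda>(x, z). z(i := x))"
  let ?DJ = "D \<Otimes>\<^sub>M PiM J (\<lambda>_. D)"
  have distr_F: "distr ?DJ (PiM I (\<lambda>_. D)) F = PiM I (\<lambda>_. D)"
    using distr_pair_PiM_eq_PiM[of J "\<lambda>_. D" i] D IJ by (simp add: F_def)
  have F: "F \<in> ?DJ \<rightarrow>\<^sub>M PiM I (\<lambda>_. D)"
  proof -
    have "(\<lambda>(f, y). f(i := y)) \<circ> (\<lambda>(x, z). (z, x)) \<in> ?DJ \<rightarrow>\<^sub>M PiM (insert i J) (\<lambda>_. D)"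
      by (intro measurable_comp[OF measurable_pair_swap'] measurable_add_dim)
    then show ?thesis by (simp add: F_def IJ o_def case_prod_beta)
  qed
  let ?E' = "F -` E \<inter> space ?DJ"
  have "emeasure (PiM I (\<lambda>_. D)) E = emeasure ?DJ ?E'"
    by (subst distr_F[symmetric]) (rule emeasure_distr[OF F E])
  also have "\<dots> = (\<integral>\<^sup>+z. emeasure D ((\<lambda>x. (x, z)) -` ?E') \<partial>PiM J (\<lambda>_. D))"
    by (rule emeasure_pair_measure_alt2) (rule measurable_sets[OF F E])
  also have "\<dots> \<le> (\<integral>\<^sup>+z. ennreal r \<partial>PiM J (\<lambda>_. D))"
  proof (rule nn_integral_mono)
    fix z assume z: "z \<in> space (PiM J (\<lambda>_. D))"
    then obtain B where B: "B \<in> sets D" "{a \<in> space D. z(i := a) \<in> E} \<subseteq> B" "measure D B \<le> r"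
      using sections J_def by blast
    have "(\<lambda>x. (x, z)) -` ?E' \<subseteq> B"
      using B(2) z by (auto simp: F_def space_pair_measure)
    then have "emeasure D ((\<lambda>x. (x, z)) -` ?E') \<le> emeasure D B"
      using B(1) by (rule emeasure_mono)
    also have "\<dots> \<le> ennreal r"
      using B(3) by (simp add: D.emeasure_eq_measure ennreal_leI)
    finally show "emeasure D ((\<lambda>x. (x, z)) -` ?E') \<le> ennreal r" .
  qed
  also have "\<dots> = ennreal r" by (simp add: PJ.emeasure_space_1)
  finally show ?thesis
    using r by (simp add: PI.emeasure_eq_measure)
qed

lemma dispersed_measure_UN_intervals_le:
  assumes disp: "dispersed D \<rho> L" and D: "sets D = sets borel" and K: "finite K"
  shows "measure D (\<Union>k\<in>K. {l k..l k + L}) \<le> real (card K) * \<rho>"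
proof -
  have "measure D (\<Union>k\<in>K. {l k..l k + L}) \<le> (\<Sum>k\<in>K. measure D {l k..l k + L})"
    using K D by (intro measure_UNION_le) auto
  also have "\<dots> \<le> (\<Sum>k\<in>K. \<rho>)"
    using disp by (intro sum_mono) (simp add: dispersed_def)
  finally show ?thesis by simp
qed

lemma pert_fun_upd:
  assumes "finite P" "i \<in> P \<times> {..<N}"
  shows "pert G P N (z(i := a)) \<pi> = a * G (\<pi> (fst i)) (snd i) +
           (\<Sum>c\<in>P \<times> {..<N} - {i}. z c * G (\<pi> (fst c)) (snd c))"
  unfolding pert_def using assms by (subst sum.remove[of _ i]) (auto intro!: sum.cong)

lemma cum_payoff_Suc:
  assumes "1 \<le> t"
  shows "cum_payoff f \<sigma> y (Suc t) \<pi> = cum_payoff f \<sigma> y t \<pi> + f (\<pi> (\<sigma> t)) (y t)"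
proof -
  have "{1..<Suc t} = insert t {1..<t}" using assms by auto
  then show ?thesis unfolding cum_payoff_def by simp
qed

text \<open>
  The \<open>\<epsilon>\<close>-leaders before (p) and after (p') one further round of payoffs w, as functions of
  a single perturbation coordinate a with coefficient g; all other terms are absorbed into A.
\<close>

locale ftpl_line =
  fixes Pol :: "'p set" and A w g :: "'p \<Rightarrow> real" and p p' :: "real \<Rightarrow> 'p" and \<epsilon> \<delta> :: real
  assumes p_in: "p a \<in> Pol"
    and p_opt: "\<pi> \<in> Pol \<Longrightarrow> A \<pi> + a * g \<pi> - \<epsilon> \<le> A (p a) + a * g (p a)"
    and p'_in: "p' a \<in> Pol"
    and p'_opt: "\<pi> \<in> Pol \<Longrightarrow> A \<pi> + w \<pi> + a * g \<pi> - \<epsilon> \<le> A (p' a) + w (p' a) + a * g (p' a)"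
    and w_range: "0 \<le> w \<pi>" "w \<pi> \<le> 1"
    and delta_pos: "0 < \<delta>"
begin

lemma switch_up_close:
  assumes "a < b" "g (p b) + \<delta> \<le> g (p' a)"
  shows "b - a \<le> (1 + 2 * \<epsilon>) / \<delta>"
proof (rule eps_optimal_switch_slopes_close[OF _ _ _ assms(2,1) delta_pos])
  show "A (p' a) + b * g (p' a) - \<epsilon> \<le> A (p b) + b * g (p b)"
    by (rule p_opt[OF p'_in])
  show "A (p b) + w (p b) + a * g (p b) - \<epsilon> \<le> A (p' a) + w (p' a) + a * g (p' a)"
    by (rule p'_opt[OF p_in])
  show "w (p' a) - w (p b) \<le> 1"
    using w_range[of "p' a"] w_range[of "p b"] by linarith
qed

lemma switch_down_close:
  assumes "a < b" "g (p' b) + \<delta> \<le> g (p a)"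
  shows "b - a \<le> (1 + 2 * \<epsilon>) / \<delta>"
proof (rule eps_optimal_switch_slopes_close[OF _ _ _ assms(2,1) delta_pos])
  \<comment> \<open>the roles of the two leaders are swapped, so w moves into the objectives X and Y\<close>
  show "(A (p a) + w (p a)) + b * g (p a) - \<epsilon> \<le> (A (p' b) + w (p' b)) + b * g (p' b)"
    using p'_opt[OF p_in[of a], of b] by simp
  show "(A (p' b) + w (p' b)) + - w (p' b) + a * g (p' b) - \<epsilon> \<le> (A (p a) + w (p a)) + - w (p a) + a * g (p a)"
    using p_opt[OF p'_in[of b], of a] by simp
  show "- w (p a) - - w (p' b) \<le> 1"
    using w_range[of "p a"] w_range[of "p' b"] by linarith
qed

lemma switch_set_covered:
  assumes eps: "0 \<le> \<epsilon>" and g_in: "\<And>\<pi>. g \<pi> \<in> V"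
    and V_gap: "\<And>u v. u \<in> V \<Longrightarrow> v \<in> V \<Longrightarrow> u \<noteq> v \<Longrightarrow> \<delta> \<le> \<bar>u - v\<bar>"
  shows "\<exists>l. {a. g (p' a) \<noteq> g (p a)}
           \<subseteq> (\<Union>k\<in>V \<times> (UNIV :: bool set). {l k..l k + (1 + 2 * \<epsilon>) / \<delta>})"
proof -
  define L where "L = (1 + 2 * \<epsilon>) / \<delta>"
  have L: "0 \<le> L" using eps delta_pos by (simp add: L_def)
  define S :: "real \<times> bool \<Rightarrow> real set" where
    "S = (\<lambda>(c, up). {a. g (p a) = c \<and> (if up then c + \<delta> \<le> g (p' a) else g (p' a) + \<delta> \<le> c)})"
  have "\<exists>l. S k \<subseteq> {l..l + L}" for k
  proof (rule bounded_gaps_subset_interval[OF L])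
    fix a b assume "a \<in> S k" "b \<in> S k" "a < b"
    then show "b - a \<le> L"
      unfolding L_def using switch_up_close switch_down_close
      by (cases k) (auto simp: S_def split: if_splits)
  qed
  then obtain l where l: "\<And>k. S k \<subseteq> {l k..l k + L}" by metis
  have "{a. g (p' a) \<noteq> g (p a)} \<subseteq> (\<Union>k\<in>V \<times> UNIV. S k)"
  proof
    fix a assume "a \<in> {a. g (p' a) \<noteq> g (p a)}"
    then have "\<delta> \<le> \<bar>g (p' a) - g (p a)\<bar>" using V_gap g_in by simp
    then have "a \<in> S (g (p a), True) \<or> a \<in> S (g (p a), False)" by (auto simp: S_def)
    then show "a \<in> (\<Union>k\<in>V \<times> UNIV. S k)" using g_in by blast
  qed
  also have "\<dots> \<subseteq> (\<Union>k\<in>V \<times> UNIV. {l k..l k + L})"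
    using l by (intro UN_mono) auto
  finally show ?thesis unfolding L_def by blast
qed

end

text \<open>The hypotheses of the theorem except \<open>Gamma_range\<close>, which the argument does not use.\<close>

locale contextual_ftpl =
  fixes f :: "'x::finite \<Rightarrow> 'y \<Rightarrow> real"
    and G :: "'x \<Rightarrow> nat \<Rightarrow> real"
    and Pol :: "('s \<Rightarrow> 'x) set"
    and P :: "'s set"
    and \<sigma> :: "nat \<Rightarrow> 's" and y :: "nat \<Rightarrow> 'y"
    and D :: "real measure"
    and pol :: "nat \<Rightarrow> ('s \<times> nat \<Rightarrow> real) \<Rightarrow> ('s \<Rightarrow> 'x)"
    and N T \<kappa> :: nat and \<delta> \<epsilon> \<rho> :: real
  assumes f_range: "\<And>x y. 0 \<le> f x y \<and> f x y \<le> 1"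
    and P_fin: "finite P"
    and ctx: "\<And>t. t \<in> {1..T} \<Longrightarrow> \<sigma> t \<in> P"
    and adm: "admissible G N \<kappa> \<delta>"
    and delta_pos: "\<delta> > 0"
    and eps: "\<epsilon> \<ge> 0"
    and D_prob: "prob_space D" and D_borel: "sets D = sets borel"
    and disp: "dispersed D \<rho> ((1 + 2 * \<epsilon>) / \<delta>)"
    and choice: "\<And>\<alpha> t. \<alpha> \<in> space (PiM (P \<times> {..<N}) (\<lambda>_. D)) \<Longrightarrow> t \<in> {1..T+1} \<Longrightarrow>
                   ftpl_choice f \<sigma> y G P N Pol \<epsilon> \<alpha> t (pol t \<alpha>)"
    and meas: "\<And>t s. t \<in> {1..T+1} \<Longrightarrow> s \<in> P \<Longrightarrow>
                 (\<lambda>\<alpha>. pol t \<alpha> s) \<in> measurable (PiM (P \<times> {..<N}) (\<lambda>_. D)) (count_space UNIV)"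
begin

abbreviation M :: "('s \<times> nat \<Rightarrow> real) measure" where
  "M \<equiv> PiM (P \<times> {..<N}) (\<lambda>_. D)"

sublocale M: prob_space M using D_prob by (intro prob_space_PiM)

lemma rho_nonneg: "0 \<le> \<rho>"
  using disp unfolding dispersed_def by (meson measure_nonneg order_trans)

lemma sets_round_event:
  assumes "t \<in> {1..T}"
  shows "{\<alpha> \<in> space M. R (pol (Suc t) \<alpha> (\<sigma> t)) (pol t \<alpha> (\<sigma> t))} \<in> sets M"
proof -
  have "t \<in> {1..T+1}" "Suc t \<in> {1..T+1}" "\<sigma> t \<in> P"
    using assms ctx by auto
  then show ?thesis
    by (intro sets_Collect_finite_valued_rel[OF meas[of "Suc t"] meas[of t]])
qed

lemma space_D: "space D = UNIV"
  using sets_eq_imp_space_eq[OF D_borel] by simp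

lemma fun_upd_in_space_M:
  assumes "i \<in> P \<times> {..<N}" "z \<in> space (PiM (P \<times> {..<N} - {i}) (\<lambda>_. D))"
  shows "z(i := a) \<in> space M"
  using assms by (auto simp: space_PiM PiE_iff extensional_def space_D)

lemma ftpl_line_section:
  assumes t: "t \<in> {1..T}" and j: "j < N"
    and z: "z \<in> space (PiM (P \<times> {..<N} - {(\<sigma> t, j)}) (\<lambda>_. D))"
  shows "ftpl_line Pol
           (\<lambda>\<pi>. cum_payoff f \<sigma> y t \<pi> + (\<Sum>c\<in>P \<times> {..<N} - {(\<sigma> t, j)}. z c * G (\<pi> (fst c)) (snd c)))
           (\<lambda>\<pi>. f (\<pi> (\<sigma> t)) (y t)) (\<lambda>\<pi>. G (\<pi> (\<sigma> t)) j)
           (\<lambda>a. pol t (z((\<sigma> t, j) := a))) (\<lambda>a. pol (Suc t) (z((\<sigma> t, j) := a))) \<epsilon> \<delta>"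
    (is "ftpl_line Pol ?A _ _ _ _ _ _")
proof
  fix a
  have i: "(\<sigma> t, j) \<in> P \<times> {..<N}" using ctx[OF t] j by simp
  have z_upd: "z((\<sigma> t, j) := a) \<in> space M"
    using fun_upd_in_space_M[OF i z] .
  have pert: "pert G P N (z((\<sigma> t, j) := a)) \<pi> = a * G (\<pi> (\<sigma> t)) j + (?A \<pi> - cum_payoff f \<sigma> y t \<pi>)" for \<pi>
    using pert_fun_upd[OF P_fin i] by simp
  have "ftpl_choice f \<sigma> y G P N Pol \<epsilon> (z((\<sigma> t, j) := a)) t (pol t (z((\<sigma> t, j) := a)))"
    using choice[OF z_upd] t by auto
  then show "pol t (z((\<sigma> t, j) := a)) \<in> Pol"
    and "\<And>\<pi>. \<pi> \<in> Pol \<Longrightarrow> ?A \<pi> + a * G (\<pi> (\<sigma> t)) j - \<epsilon>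
               \<le> ?A (pol t (z((\<sigma> t, j) := a))) + a * G (pol t (z((\<sigma> t, j) := a)) (\<sigma> t)) j"
    unfolding ftpl_choice_def pert by auto
  have "ftpl_choice f \<sigma> y G P N Pol \<epsilon> (z((\<sigma> t, j) := a)) (Suc t) (pol (Suc t) (z((\<sigma> t, j) := a)))"
    using choice[OF z_upd] t by auto
  then show "pol (Suc t) (z((\<sigma> t, j) := a)) \<in> Pol"
    and "\<And>\<pi>. \<pi> \<in> Pol \<Longrightarrow> ?A \<pi> + f (\<pi> (\<sigma> t)) (y t) + a * G (\<pi> (\<sigma> t)) j - \<epsilon>
               \<le> ?A (pol (Suc t) (z((\<sigma> t, j) := a))) + f (pol (Suc t) (z((\<sigma> t, j) := a)) (\<sigma> t)) (y t)
                 + a * G (pol (Suc t) (z((\<sigma> t, j) := a)) (\<sigma> t)) j"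
    unfolding ftpl_choice_def pert using t by (auto simp: cum_payoff_Suc algebra_simps)
qed (simp_all add: f_range delta_pos)

lemma column_switch_section_small:
  assumes t: "t \<in> {1..T}" and j: "j < N"
    and z: "z \<in> space (PiM (P \<times> {..<N} - {(\<sigma> t, j)}) (\<lambda>_. D))"
  shows "\<exists>B\<in>sets D. {a. G (pol (Suc t) (z((\<sigma> t, j) := a)) (\<sigma> t)) j
                          \<noteq> G (pol t (z((\<sigma> t, j) := a)) (\<sigma> t)) j} \<subseteq> B
           \<and> measure D B \<le> 2 * real \<kappa> * \<rho>"
proof -
  interpret line: ftpl_line Pol
    "\<lambda>\<pi>. cum_payoff f \<sigma> y t \<pi> + (\<Sum>c\<in>P \<times> {..<N} - {(\<sigma> t, j)}. z c * G (\<pi> (fst c)) (snd c))"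
    "\<lambda>\<pi>. f (\<pi> (\<sigma> t)) (y t)" "\<lambda>\<pi>. G (\<pi> (\<sigma> t)) j"
    "\<lambda>a. pol t (z((\<sigma> t, j) := a))" "\<lambda>a. pol (Suc t) (z((\<sigma> t, j) := a))" \<epsilon> \<delta>
    by (rule ftpl_line_section[OF t j z])
  let ?V = "range (\<lambda>x. G x j)"
  have V_gap: "\<And>u v. u \<in> ?V \<Longrightarrow> v \<in> ?V \<Longrightarrow> u \<noteq> v \<Longrightarrow> \<delta> \<le> \<bar>u - v\<bar>"
    using adm j unfolding admissible_def by blast
  have "\<exists>l. {a. G (pol (Suc t) (z((\<sigma> t, j) := a)) (\<sigma> t)) j \<noteq> G (pol t (z((\<sigma> t, j) := a)) (\<sigma> t)) j}
      \<subseteq> (\<Union>k\<in>?V \<times> (UNIV :: bool set). {l k..l k + (1 + 2 * \<epsilon>) / \<delta>})"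
    by (rule line.switch_set_covered[OF eps _ V_gap]) simp
  then obtain l where l: "{a. G (pol (Suc t) (z((\<sigma> t, j) := a)) (\<sigma> t)) j
                              \<noteq> G (pol t (z((\<sigma> t, j) := a)) (\<sigma> t)) j}
      \<subseteq> (\<Union>k\<in>?V \<times> (UNIV :: bool set). {l k..l k + (1 + 2 * \<epsilon>) / \<delta>})"
    by blast
  let ?B = "\<Union>k\<in>?V \<times> (UNIV :: bool set). {l k..l k + (1 + 2 * \<epsilon>) / \<delta>}"
  have "measure D ?B \<le> real (card (?V \<times> (UNIV :: bool set))) * \<rho>"
    using disp D_borel by (intro dispersed_measure_UN_intervals_le) simp_all
  also have "\<dots> \<le> 2 * real \<kappa> * \<rho>"
    using adm j rho_nonneg by (intro mult_right_mono) (auto simp: admissible_def card_cartesian_product)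
  finally have B_measure: "measure D ?B \<le> 2 * real \<kappa> * \<rho>" .
  have B_sets: "?B \<in> sets D"
    using D_borel by (intro sets.finite_UN) auto
  show ?thesis
    using conjI[OF l B_measure] B_sets by (rule bexI)
qed

lemma prob_column_switch_le:
  assumes t: "t \<in> {1..T}" and j: "j < N"
  shows "measure M {\<alpha> \<in> space M. G (pol (Suc t) \<alpha> (\<sigma> t)) j \<noteq> G (pol t \<alpha> (\<sigma> t)) j}
           \<le> 2 * real \<kappa> * \<rho>"
proof -
  have i: "(\<sigma> t, j) \<in> P \<times> {..<N}" using ctx[OF t] j by simp
  show ?thesis
  proof (rule measure_PiM_le_by_sections[OF D_prob i sets_round_event[OF t]])
    show "0 \<le> 2 * real \<kappa> * \<rho>" using rho_nonneg by simp
  next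
    fix z assume z: "z \<in> space (PiM (P \<times> {..<N} - {(\<sigma> t, j)}) (\<lambda>_. D))"
    have "{a \<in> space D. z((\<sigma> t, j) := a)
            \<in> {\<alpha> \<in> space M. G (pol (Suc t) \<alpha> (\<sigma> t)) j \<noteq> G (pol t \<alpha> (\<sigma> t)) j}}
        = {a. G (pol (Suc t) (z((\<sigma> t, j) := a)) (\<sigma> t)) j \<noteq> G (pol t (z((\<sigma> t, j) := a)) (\<sigma> t)) j}"
      using fun_upd_in_space_M[OF i z] by (auto simp: space_D)
    with column_switch_section_small[OF t j z]
    show "\<exists>B\<in>sets D. {a \<in> space D. z((\<sigma> t, j) := a)
            \<in> {\<alpha> \<in> space M. G (pol (Suc t) \<alpha> (\<sigma> t)) j \<noteq> G (pol t \<alpha> (\<sigma> t)) j}} \<subseteq> B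
          \<and> measure D B \<le> 2 * real \<kappa> * \<rho>"
      by (simp only:)
  qed
qed

lemma prob_round_switch_le:
  assumes t: "t \<in> {1..T}"
  shows "measure M {\<alpha> \<in> space M. pol (Suc t) \<alpha> (\<sigma> t) \<noteq> pol t \<alpha> (\<sigma> t)}
           \<le> real N * (2 * real \<kappa> * \<rho>)"
proof -
  let ?E = "\<lambda>j. {\<alpha> \<in> space M. G (pol (Suc t) \<alpha> (\<sigma> t)) j \<noteq> G (pol t \<alpha> (\<sigma> t)) j}"
  have "{\<alpha> \<in> space M. pol (Suc t) \<alpha> (\<sigma> t) \<noteq> pol t \<alpha> (\<sigma> t)} \<subseteq> (\<Union>j<N. ?E j)"
    using adm unfolding admissible_def by fastforce
  then have "measure M {\<alpha> \<in> space M. pol (Suc t) \<alpha> (\<sigma> t) \<noteq> pol t \<alpha> (\<sigma> t)}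
      \<le> measure M (\<Union>j<N. ?E j)"
    using sets_round_event[OF t] by (intro M.finite_measure_mono) auto
  also have "\<dots> \<le> (\<Sum>j<N. measure M (?E j))"
    using sets_round_event[OF t] by (intro measure_UNION_le) auto
  also have "\<dots> \<le> (\<Sum>j<N. 2 * real \<kappa> * \<rho>)"
    using prob_column_switch_le[OF t] by (intro sum_mono) auto
  finally show ?thesis by simp
qed

lemma borel_measurable_round_payoff:
  assumes "t' \<in> {1..T+1}" "t \<in> {1..T}"
  shows "(\<lambda>\<alpha>. f (pol t' \<alpha> (\<sigma> t)) (y t)) \<in> borel_measurable M"
  using measurable_compose[OF meas[OF assms(1) ctx[OF assms(2)]], of "\<lambda>x. f x (y t)" borel]
  by simp

lemma integrable_round_difference:
  assumes t: "t \<in> {1..T}"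
  shows "integrable M (\<lambda>\<alpha>. f (pol (Suc t) \<alpha> (\<sigma> t)) (y t) - f (pol t \<alpha> (\<sigma> t)) (y t))"
proof (rule M.integrable_const_bound[where B = 1])
  show "AE \<alpha> in M. norm (f (pol (Suc t) \<alpha> (\<sigma> t)) (y t) - f (pol t \<alpha> (\<sigma> t)) (y t)) \<le> 1"
  proof (intro AE_I2)
    fix \<alpha>
    show "norm (f (pol (Suc t) \<alpha> (\<sigma> t)) (y t) - f (pol t \<alpha> (\<sigma> t)) (y t)) \<le> 1"
      using f_range[of "pol (Suc t) \<alpha> (\<sigma> t)" "y t"] f_range[of "pol t \<alpha> (\<sigma> t)" "y t"] by auto
  qed
  show "(\<lambda>\<alpha>. f (pol (Suc t) \<alpha> (\<sigma> t)) (y t) - f (pol t \<alpha> (\<sigma> t)) (y t)) \<in> borel_measurable M"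
    using t by (intro borel_measurable_diff borel_measurable_round_payoff) auto
qed

lemma expected_round_difference_le:
  assumes t: "t \<in> {1..T}"
  shows "(\<integral>\<alpha>. f (pol (Suc t) \<alpha> (\<sigma> t)) (y t) - f (pol t \<alpha> (\<sigma> t)) (y t) \<partial>M)
           \<le> real N * (2 * real \<kappa> * \<rho>)"
proof -
  define S where "S = {\<alpha> \<in> space M. pol (Suc t) \<alpha> (\<sigma> t) \<noteq> pol t \<alpha> (\<sigma> t)}"
  have S: "S \<in> sets M" unfolding S_def by (rule sets_round_event[OF t])
  have "(\<integral>\<alpha>. f (pol (Suc t) \<alpha> (\<sigma> t)) (y t) - f (pol t \<alpha> (\<sigma> t)) (y t) \<partial>M)
      \<le> (\<integral>\<alpha>. indicator S \<alpha> \<partial>M)"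
  proof (rule integral_mono[OF integrable_round_difference[OF t]])
    show "integrable M (indicator S :: _ \<Rightarrow> real)"
      using S by (simp add: M.emeasure_eq_measure)
    show "f (pol (Suc t) \<alpha> (\<sigma> t)) (y t) - f (pol t \<alpha> (\<sigma> t)) (y t) \<le> indicator S \<alpha>"
      if "\<alpha> \<in> space M" for \<alpha>
      using that f_range[of "pol (Suc t) \<alpha> (\<sigma> t)" "y t"] f_range[of "pol t \<alpha> (\<sigma> t)" "y t"]
      by (auto simp: S_def indicator_def)
  qed
  also have "\<dots> = measure M S" using S by simp
  also have "\<dots> \<le> real N * (2 * real \<kappa> * \<rho>)"
    unfolding S_def by (rule prob_round_switch_le[OF t])
  finally show ?thesis .
qed

lemma expected_stability_le:
  "(\<integral>\<alpha>. (\<Sum>t\<in>{1..T}. f (pol (Suc t) \<alpha> (\<sigma> t)) (y t) - f (pol t \<alpha> (\<sigma> t)) (y t)) \<partial>M)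
     \<le> 2 * real T * real N * real \<kappa> * \<rho>"
proof -
  have "(\<integral>\<alpha>. (\<Sum>t\<in>{1..T}. f (pol (Suc t) \<alpha> (\<sigma> t)) (y t) - f (pol t \<alpha> (\<sigma> t)) (y t)) \<partial>M)
      = (\<Sum>t\<in>{1..T}. (\<integral>\<alpha>. f (pol (Suc t) \<alpha> (\<sigma> t)) (y t) - f (pol t \<alpha> (\<sigma> t)) (y t) \<partial>M))"
    using integrable_round_difference by (rule Bochner_Integration.integral_sum)
  also have "\<dots> \<le> (\<Sum>t\<in>{1..T}. real N * (2 * real \<kappa> * \<rho>))"
    using expected_round_difference_le by (rule sum_mono)
  finally show ?thesis by simp
qed

end

theorem lemma4p3:
  fixes f :: "'x::finite \<Rightarrow> 'y \<Rightarrow> real"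
    and G :: "'x \<Rightarrow> nat \<Rightarrow> real"
    and Pol :: "('s \<Rightarrow> 'x) set"
    and P :: "'s set"
    and \<sigma> :: "nat \<Rightarrow> 's" and y :: "nat \<Rightarrow> 'y"
    and D :: "real measure"
    and pol :: "nat \<Rightarrow> ('s \<times> nat \<Rightarrow> real) \<Rightarrow> ('s \<Rightarrow> 'x)"
    and N T \<kappa> :: nat and \<delta> \<epsilon> \<rho> :: real
  assumes f_range: "\<And>x y. 0 \<le> f x y \<and> f x y \<le> 1"
    and P_fin: "finite P"
    and ctx: "\<And>t. t \<in> {1..T} \<Longrightarrow> \<sigma> t \<in> P"
    and Gamma_range: "\<And>x j. j < N \<Longrightarrow> 0 \<le> G x j \<and> G x j \<le> 1"
    and adm: "admissible G N \<kappa> \<delta>"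
    and delta_pos: "\<delta> > 0"
    and eps: "\<epsilon> \<ge> 0"
    and D_prob: "prob_space D" and D_borel: "sets D = sets borel"
    and disp: "dispersed D \<rho> ((1 + 2 * \<epsilon>) / \<delta>)"
    and choice: "\<And>\<alpha> t. \<alpha> \<in> space (PiM (P \<times> {..<N}) (\<lambda>_. D)) \<Longrightarrow> t \<in> {1..T+1} \<Longrightarrow>
                   ftpl_choice f \<sigma> y G P N Pol \<epsilon> \<alpha> t (pol t \<alpha>)"
    and meas: "\<And>t s. t \<in> {1..T+1} \<Longrightarrow> s \<in> P \<Longrightarrow>
                 (\<lambda>\<alpha>. pol t \<alpha> s) \<in> measurable (PiM (P \<times> {..<N}) (\<lambda>_. D)) (count_space UNIV)"
  shows "(\<integral>\<alpha>. (\<Sum>t\<in>{1..T}. f (pol (Suc t) \<alpha> (\<sigma> t)) (y t) - f (pol t \<alpha> (\<sigma> t)) (y t))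
            \<partial>(PiM (P \<times> {..<N}) (\<lambda>_. D)))
         \<le> 2 * real T * real N * real \<kappa> * \<rho>"
proof -
  interpret contextual_ftpl f G Pol P \<sigma> y D pol N T \<kappa> \<delta> \<epsilon> \<rho>
    using f_range P_fin ctx adm delta_pos eps D_prob D_borel disp choice meas
    by (rule contextual_ftpl.intro)
  show ?thesis by (rule expected_stability_le)
qed

end
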